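(* Let $(X,\sigma)$ be an $F$-distance space and let $T:X\to X$ be a map such that $\sigma(Tx,Ty)\le\lambda\sigma(x,y)$ for some $\lambda\in[0,1)$ and all $x,y\in X$. Then: (1) for every $x_1\in X$, the sequence $\{x_n\}$ defined by $x_{n+1}=Tx_n$ ($n\in\mathbb N$) is Cauchy in $(X,\sigma)$; (2) if $(X,\sigma)$ is complete, then $T$ has a unique fixed point.
   Context: An $F$-distance on a nonempty set $X$ is a function $\sigma:X\times X\to[0,\infty)$ (not assumed symmetric) such that: $\sigma(x,y)=0$ iff $x=y$; and for every $\varepsilon>0$ there exists $\phi(\varepsilon)>0$ such that for all $x,y,z\in X$, if $\sigma(x,y)\le\phi(\varepsilon)$ and $\sigma(y,z)\le\phi(\varepsilon)$ then $\sigma(x,z)\le\varepsilon$ and $\sigma(z,x)\le\varepsilon$. The pair $(X,\sigma)$ is an $F$-distance space. A sequence $\{x_n\}$ converges to $x$ in $(X,\sigma)$ if $\lim_n\sigma(x_n,x)=0=\lim_n\sigma(x,x_n)$; it is Cauchy if $\lim_{n,m\to\infty}\sigma(x_n,x_m)=0$; $(X,\sigma)$ is complete if every Cauchy sequence converges. *)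

theory Defs
  imports "HOL-Analysis.Analysis"
begin

definition F_distance :: "('a \<Rightarrow> 'a \<Rightarrow> real) \<Rightarrow> bool" where
  "F_distance \<sigma> \<longleftrightarrow>
     (\<forall>x y. \<sigma> x y \<ge> 0) \<and>
     (\<forall>x y. \<sigma> x y = 0 \<longleftrightarrow> x = y) \<and>
     (\<forall>\<epsilon>>0. \<exists>\<delta>>0. \<forall>x y z. \<sigma> x y \<le> \<delta> \<and> \<sigma> y z \<le> \<delta> \<longrightarrow>
                          \<sigma> x z \<le> \<epsilon> \<and> \<sigma> z x \<le> \<epsilon>)"

definition F_converges :: "('a \<Rightarrow> 'a \<Rightarrow> real) \<Rightarrow> (nat \<Rightarrow> 'a) \<Rightarrow> 'a \<Rightarrow> bool" where
  "F_converges \<sigma> s x \<longleftrightarrow>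
     ((\<lambda>n. \<sigma> (s n) x) \<longlonglongrightarrow> 0) \<and> ((\<lambda>n. \<sigma> x (s n)) \<longlonglongrightarrow> 0)"

definition F_Cauchy :: "('a \<Rightarrow> 'a \<Rightarrow> real) \<Rightarrow> (nat \<Rightarrow> 'a) \<Rightarrow> bool" where
  "F_Cauchy \<sigma> s \<longleftrightarrow> (\<forall>\<epsilon>>0. \<exists>N. \<forall>n\<ge>N. \<forall>m\<ge>N. \<sigma> (s n) (s m) < \<epsilon>)"

definition F_complete :: "('a \<Rightarrow> 'a \<Rightarrow> real) \<Rightarrow> bool" where
  "F_complete \<sigma> \<longleftrightarrow> (\<forall>s. F_Cauchy \<sigma> s \<longrightarrow> (\<exists>x. F_converges \<sigma> s x))"

end

theory Submission
  imports Defs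
begin

text \<open>Without a triangle inequality the usual geometric-series estimate is unavailable. Instead,
  fix \<open>\<epsilon>\<close>, take the \<open>\<delta>\<close> of the F-distance axiom and a power \<open>k\<^sup>p\<close> with \<open>k\<^sup>p \<epsilon> \<le> \<delta>\<close>. Far out
  in the orbit all distances across at most \<open>p\<close> steps are below \<open>\<delta>\<close>; a jump of \<open>j > p\<close> steps is a
  jump of \<open>p\<close> steps followed by the \<open>T\<^sup>p\<close>-image of a jump of \<open>j - p\<close> steps, which by induction is
  at most \<open>k\<^sup>p \<epsilon> \<le> \<delta>\<close>, so one application of the axiom bounds it by \<open>\<epsilon>\<close> in both directions.
  When the space is complete, the orbit and its shift converge to some \<open>x\<close> and to \<open>T x\<close>
  respectively, and limits are unique.\<close>

lemma F_distance_nonneg: "F_distance \<sigma> \<Longrightarrow> 0 \<le> \<sigma> x y"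
  unfolding F_distance_def by blast

lemma F_distance_eq_0_iff: "F_distance \<sigma> \<Longrightarrow> \<sigma> x y = 0 \<longleftrightarrow> x = y"
  unfolding F_distance_def by blast

lemma F_distanceE:
  assumes "F_distance \<sigma>" "\<epsilon> > 0"
  obtains \<delta> where "\<delta> > 0"
    "\<And>x y z. \<sigma> x y \<le> \<delta> \<Longrightarrow> \<sigma> y z \<le> \<delta> \<Longrightarrow> \<sigma> x z \<le> \<epsilon> \<and> \<sigma> z x \<le> \<epsilon>"
proof -
  obtain \<delta> where "\<delta> > 0"
    and "\<forall>x y z. \<sigma> x y \<le> \<delta> \<and> \<sigma> y z \<le> \<delta> \<longrightarrow> \<sigma> x z \<le> \<epsilon> \<and> \<sigma> z x \<le> \<epsilon>"
    using assms unfolding F_distance_def by blast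
  then show thesis using that by blast
qed

lemma F_distance_tendsto_0_if_le:
  assumes "F_distance \<sigma>" "\<And>n. \<sigma> (f n) (g n) \<le> b n" "b \<longlonglongrightarrow> 0"
  shows "(\<lambda>n. \<sigma> (f n) (g n)) \<longlonglongrightarrow> 0"
proof (rule tendsto_sandwich[OF _ _ tendsto_const assms(3)])
  show "\<forall>\<^sub>F n in sequentially. 0 \<le> \<sigma> (f n) (g n)"
    using F_distance_nonneg[OF assms(1)] by (simp add: always_eventually)
  show "\<forall>\<^sub>F n in sequentially. \<sigma> (f n) (g n) \<le> b n"
    using assms(2) by (simp add: always_eventually)
qed

lemma F_distance_eq_if_tendsto:
  assumes F: "F_distance \<sigma>"
    and lim_x: "(\<lambda>n. \<sigma> x (s n)) \<longlonglongrightarrow> 0" and lim_y: "(\<lambda>n. \<sigma> (s n) y) \<longlonglongrightarrow> 0"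
  shows "x = y"
proof -
  have "\<sigma> x y \<le> 0 + \<epsilon>" if "\<epsilon> > 0" for \<epsilon>
  proof -
    obtain \<delta> where "\<delta> > 0" and \<delta>:
      "\<And>x y z. \<sigma> x y \<le> \<delta> \<Longrightarrow> \<sigma> y z \<le> \<delta> \<Longrightarrow> \<sigma> x z \<le> \<epsilon> \<and> \<sigma> z x \<le> \<epsilon>"
      using F_distanceE[OF F \<open>\<epsilon> > 0\<close>] by blast
    have "\<forall>\<^sub>F n in sequentially. \<sigma> x (s n) < \<delta> \<and> \<sigma> (s n) y < \<delta>"
      using order_tendstoD(2)[OF lim_x \<open>\<delta> > 0\<close>] order_tendstoD(2)[OF lim_y \<open>\<delta> > 0\<close>]
      by (rule eventually_conj)
    then obtain n where "\<sigma> x (s n) < \<delta>" "\<sigma> (s n) y < \<delta>"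
      unfolding eventually_sequentially by blast
    then show ?thesis using \<delta>[of x "s n" y] by simp
  qed
  then have "\<sigma> x y \<le> 0" by (rule field_le_epsilon)
  then show ?thesis using F_distance_nonneg[OF F, of x y] F_distance_eq_0_iff[OF F] by simp
qed

lemma F_converges_unique:
  assumes "F_distance \<sigma>" "F_converges \<sigma> s x" "F_converges \<sigma> s y"
  shows "x = y"
  using assms F_distance_eq_if_tendsto[of \<sigma> x s y] unfolding F_converges_def by blast

lemma F_converges_contraction:
  assumes F: "F_distance \<sigma>" and contr: "\<forall>x y. \<sigma> (T x) (T y) \<le> k * \<sigma> x y"
    and conv: "F_converges \<sigma> s x"
  shows "F_converges \<sigma> (\<lambda>n. T (s n)) (T x)"
proof -
  have "(\<lambda>n. k * \<sigma> (s n) x) \<longlonglongrightarrow> 0" "(\<lambda>n. k * \<sigma> x (s n)) \<longlonglongrightarrow> 0"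
    using conv tendsto_mult_right_zero unfolding F_converges_def by blast+
  moreover have "\<sigma> (T (s n)) (T x) \<le> k * \<sigma> (s n) x" "\<sigma> (T x) (T (s n)) \<le> k * \<sigma> x (s n)" for n
    using contr by blast+
  ultimately show ?thesis
    unfolding F_converges_def
    by (intro conjI F_distance_tendsto_0_if_le[OF F]) assumption+
qed

lemma contraction_funpow:
  fixes \<sigma> :: "'a \<Rightarrow> 'a \<Rightarrow> real"
  assumes "0 \<le> k" "\<forall>x y. \<sigma> (T x) (T y) \<le> k * \<sigma> x y"
  shows "\<sigma> ((T ^^ n) x) ((T ^^ n) y) \<le> k ^ n * \<sigma> x y"
proof (induction n)
  case 0
  show ?case by simp
next
  case (Suc n)
  have "\<sigma> ((T ^^ Suc n) x) ((T ^^ Suc n) y) \<le> k * \<sigma> ((T ^^ n) x) ((T ^^ n) y)"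
    using assms(2) by simp
  also have "\<dots> \<le> k * (k ^ n * \<sigma> x y)"
    using Suc assms(1) by (rule mult_left_mono)
  finally show ?case by simp
qed

lemma contraction_unique_fixed_point:
  assumes F: "F_distance \<sigma>" and "k < 1" and contr: "\<forall>x y. \<sigma> (T x) (T y) \<le> k * \<sigma> x y"
    and "T x = x" "T y = y"
  shows "x = y"
proof -
  have "\<sigma> x y \<le> k * \<sigma> x y" using contr \<open>T x = x\<close> \<open>T y = y\<close> by metis
  moreover have "k * \<sigma> x y < \<sigma> x y" if "\<sigma> x y > 0"
    using \<open>k < 1\<close> that by simp
  ultimately have "\<sigma> x y = 0"
    using F_distance_nonneg[OF F, of x y] by fastforce
  then show ?thesis using F_distance_eq_0_iff[OF F] by blast
qed

lemma orbit_dist_tendsto_0: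
  assumes F: "F_distance \<sigma>" and "0 \<le> k" "k < 1"
    and contr: "\<forall>x y. \<sigma> (T x) (T y) \<le> k * \<sigma> x y"
  shows "(\<lambda>n. \<sigma> ((T ^^ n) x) ((T ^^ (n + i)) x)) \<longlonglongrightarrow> 0"
proof -
  have "\<sigma> ((T ^^ n) x) ((T ^^ (n + i)) x) \<le> k ^ n * \<sigma> x ((T ^^ i) x)" for n
    using contraction_funpow[OF \<open>0 \<le> k\<close> contr, of n x "(T ^^ i) x"] by (simp add: funpow_add)
  moreover have "(\<lambda>n. k ^ n * \<sigma> x ((T ^^ i) x)) \<longlonglongrightarrow> 0"
    using \<open>0 \<le> k\<close> \<open>k < 1\<close> by (intro tendsto_mult_left_zero LIMSEQ_realpow_zero)
  ultimately show ?thesis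
    by (rule F_distance_tendsto_0_if_le[OF F, of "\<lambda>n. (T ^^ n) x" "\<lambda>n. (T ^^ (n + i)) x"])
qed

text \<open>For \<open>j \<le> p\<close> the \<open>\<delta>\<close>-property is applied to the triple \<open>T\<^sup>n x, T\<^sup>n x, T\<^sup>n\<^sup>+\<^sup>j x\<close>;
  this is why the hypothesis on short steps includes \<open>i = 0\<close>.\<close>

lemma orbit_dist_le_if_steps_le:
  fixes \<sigma> :: "'a \<Rightarrow> 'a \<Rightarrow> real"
  assumes "0 \<le> k" and contr: "\<forall>x y. \<sigma> (T x) (T y) \<le> k * \<sigma> x y"
    and \<delta>: "\<And>x y z. \<sigma> x y \<le> \<delta> \<Longrightarrow> \<sigma> y z \<le> \<delta> \<Longrightarrow> \<sigma> x z \<le> \<epsilon> \<and> \<sigma> z x \<le> \<epsilon>"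
    and "p \<ge> 1" and power: "k ^ p * \<epsilon> \<le> \<delta>"
    and steps: "\<And>n i. N \<le> n \<Longrightarrow> i \<le> p \<Longrightarrow> \<sigma> ((T ^^ n) x) ((T ^^ (n + i)) x) \<le> \<delta>"
    and "N \<le> n"
  shows "\<sigma> ((T ^^ n) x) ((T ^^ (n + j)) x) \<le> \<epsilon> \<and> \<sigma> ((T ^^ (n + j)) x) ((T ^^ n) x) \<le> \<epsilon>"
proof (induction j rule: less_induct)
  case (less j)
  let ?s = "\<lambda>n. (T ^^ n) x"
  show ?case
  proof (cases "j \<le> p")
    case True
    then show ?thesis using \<delta> steps[OF \<open>N \<le> n\<close>] by (metis add_0_right le0)
  next
    case False
    define j' where "j' = j - p"
    have j: "j = p + j'" "j' < j"
      using False \<open>p \<ge> 1\<close> unfolding j'_def by auto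
    have shift: "(T ^^ p) (?s m) = ?s (m + p)" for m
      by (metis add.commute comp_apply funpow_add)
    have "\<sigma> (?s (n + p)) (?s (n + j)) = \<sigma> ((T ^^ p) (?s n)) ((T ^^ p) (?s (n + j')))"
      unfolding shift j(1) by (simp add: add.commute add.left_commute)
    also have "\<dots> \<le> k ^ p * \<sigma> (?s n) (?s (n + j'))"
      by (rule contraction_funpow[OF \<open>0 \<le> k\<close> contr])
    also have "\<dots> \<le> k ^ p * \<epsilon>"
      using less.IH[OF j(2)] \<open>0 \<le> k\<close> by (intro mult_left_mono) auto
    finally have "\<sigma> (?s (n + p)) (?s (n + j)) \<le> \<delta>" using power by linarith
    then show ?thesis using \<delta> steps[OF \<open>N \<le> n\<close> order_refl] by blast
  qed
qed

lemma contraction_orbit_F_Cauchy: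
  assumes F: "F_distance \<sigma>" and "0 \<le> k" "k < 1"
    and contr: "\<forall>x y. \<sigma> (T x) (T y) \<le> k * \<sigma> x y"
  shows "F_Cauchy \<sigma> (\<lambda>n. (T ^^ n) x)"
  unfolding F_Cauchy_def
proof (intro allI impI)
  fix \<epsilon> :: real
  assume "\<epsilon> > 0"
  then obtain \<delta> where "\<delta> > 0" and \<delta>:
    "\<And>x y z. \<sigma> x y \<le> \<delta> \<Longrightarrow> \<sigma> y z \<le> \<delta> \<Longrightarrow> \<sigma> x z \<le> \<epsilon> / 2 \<and> \<sigma> z x \<le> \<epsilon> / 2"
    using F_distanceE[OF F, of "\<epsilon> / 2"] by auto
  have "(\<lambda>p. k ^ p * (\<epsilon> / 2)) \<longlonglongrightarrow> 0"
    using \<open>0 \<le> k\<close> \<open>k < 1\<close> by (intro tendsto_mult_left_zero LIMSEQ_realpow_zero)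
  then have "\<forall>\<^sub>F p in sequentially. p \<ge> 1 \<and> k ^ p * (\<epsilon> / 2) < \<delta>"
    using \<open>\<delta> > 0\<close> by (intro eventually_conj eventually_ge_at_top order_tendstoD(2))
  then obtain p where "p \<ge> 1" and power: "k ^ p * (\<epsilon> / 2) \<le> \<delta>"
    unfolding eventually_sequentially by (meson order_refl less_imp_le)
  have "\<forall>\<^sub>F n in sequentially. \<forall>i\<in>{..p}. \<sigma> ((T ^^ n) x) ((T ^^ (n + i)) x) < \<delta>"
    using orbit_dist_tendsto_0[OF assms] \<open>\<delta> > 0\<close>
    by (intro eventually_ball_finite ballI order_tendstoD(2)) auto
  then obtain N where steps: "\<And>n i. N \<le> n \<Longrightarrow> i \<le> p \<Longrightarrow> \<sigma> ((T ^^ n) x) ((T ^^ (n + i)) x) \<le> \<delta>"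
    unfolding eventually_sequentially by (meson atMost_iff less_imp_le)
  have tail: "\<sigma> ((T ^^ n) x) ((T ^^ (n + j)) x) \<le> \<epsilon> / 2 \<and> \<sigma> ((T ^^ (n + j)) x) ((T ^^ n) x) \<le> \<epsilon> / 2"
    if "N \<le> n" for n j
    using \<open>0 \<le> k\<close> contr \<delta> \<open>p \<ge> 1\<close> power steps that by (rule orbit_dist_le_if_steps_le)
  have "\<sigma> ((T ^^ n) x) ((T ^^ m) x) < \<epsilon>" if "N \<le> n" "N \<le> m" for n m
  proof (cases "n \<le> m")
    case True
    then show ?thesis using tail[OF \<open>N \<le> n\<close>, of "m - n"] \<open>\<epsilon> > 0\<close> by simp
  next
    case False
    then show ?thesis using tail[OF \<open>N \<le> m\<close>, of "n - m"] \<open>\<epsilon> > 0\<close> by simp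
  qed
  then show "\<exists>N. \<forall>n\<ge>N. \<forall>m\<ge>N. \<sigma> ((T ^^ n) x) ((T ^^ m) x) < \<epsilon>" by blast
qed

lemma contraction_fixed_point_exists:
  assumes F: "F_distance \<sigma>" and "F_complete \<sigma>" and "0 \<le> k" "k < 1"
    and contr: "\<forall>x y. \<sigma> (T x) (T y) \<le> k * \<sigma> x y"
  shows "\<exists>x. T x = x"
proof -
  let ?s = "\<lambda>n. (T ^^ n) undefined"
  obtain x where conv: "F_converges \<sigma> ?s x"
    using \<open>F_complete \<sigma>\<close> contraction_orbit_F_Cauchy[OF F \<open>0 \<le> k\<close> \<open>k < 1\<close> contr]
    unfolding F_complete_def by blast
  have "F_converges \<sigma> (\<lambda>n. ?s (Suc n)) x"
    using conv LIMSEQ_Suc unfolding F_converges_def by blast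
  moreover have "F_converges \<sigma> (\<lambda>n. ?s (Suc n)) (T x)"
    using F_converges_contraction[OF F contr conv] by simp
  ultimately show ?thesis using F_converges_unique[OF F] by metis
qed

theorem mainTheorem2:
  fixes \<sigma> :: "'a \<Rightarrow> 'a \<Rightarrow> real" and T :: "'a \<Rightarrow> 'a" and k :: real
  assumes "F_distance \<sigma>"
    and "0 \<le> k" and "k < 1"
    and "\<forall>x y. \<sigma> (T x) (T y) \<le> k * \<sigma> x y"
  shows "(\<forall>x1. F_Cauchy \<sigma> (\<lambda>n. (T ^^ n) x1))
       \<and> (F_complete \<sigma> \<longrightarrow> (\<exists>!x. T x = x))"
proof (intro conjI allI impI)
  show "F_Cauchy \<sigma> (\<lambda>n. (T ^^ n) x1)" for x1
    by (rule contraction_orbit_F_Cauchy[OF assms])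
  assume "F_complete \<sigma>"
  then obtain x where "T x = x"
    using contraction_fixed_point_exists[OF assms(1) _ assms(2-4)] by blast
  then show "\<exists>!x. T x = x"
    using contraction_unique_fixed_point[OF assms(1,3,4)] by blast
qed

end
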